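(* Let $W\in[0,1]^{k\times k}$ be a symmetric positive semidefinite matrix with unit diagonal, $\mu>0$, and consider linear utilities $u_i({\boldsymbol\theta})=W_i^\top{\boldsymbol\theta}$ with thresholds $\mu_i=\mu$ and strategy space $\mathbb{R}_+^k$. Let ${\boldsymbol\theta}^{\mathrm{eq}}$ be an optimal stable equilibrium, $I=\{i:\theta^{\mathrm{eq}}_i=0\}$, $\bar W$ and $\bar{\boldsymbol\theta}^{\mathrm{eq}}$ the restrictions of $W$ (rows and columns) and ${\boldsymbol\theta}^{\mathrm{eq}}$ to $[k]\setminus I$, and $B$ the submatrix of $W$ with rows indexed by $[k]\setminus I$ and columns indexed by $I$. If $\bar{\boldsymbol\theta}$ is an optimal solution of $\min_{\bf x}\{\mathbf{1}^\top{\bf x}:\bar W{\bf x}\ge\mu\mathbf{1},\ {\bf x}\ge\mathbf{0}\}$, then $B^\top(\bar{\boldsymbol\theta}^{\mathrm{eq}}-\bar{\boldsymbol\theta})=\mathbf{0}$.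
   Context: $W_i$ is the $i$-th column of $W$. ${\boldsymbol\theta}$ is feasible if $u_i({\boldsymbol\theta})\ge\mu$ for all $i$. A feasible ${\boldsymbol\theta}\in\mathbb{R}_+^k$ is a stable equilibrium if for no $i$ is there $0\le\theta_i'<\theta_i$ with $u_i(\theta_i',{\boldsymbol\theta}_{-i})\ge\mu$ (${\boldsymbol\theta}$ with $i$-th entry replaced). An optimal stable equilibrium minimizes $\mathbf{1}^\top{\boldsymbol\theta}$ among stable equilibria. *)

theory Defs
  imports Complex_Main
begin

definition psd :: "nat \<Rightarrow> (nat \<Rightarrow> nat \<Rightarrow> real) \<Rightarrow> bool" where
  "psd k W \<longleftrightarrow> (\<forall>x :: nat \<Rightarrow> real. 0 \<le> (\<Sum>i<k. \<Sum>j<k. x i * W i j * x j))"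

definition util :: "nat \<Rightarrow> (nat \<Rightarrow> nat \<Rightarrow> real) \<Rightarrow> nat \<Rightarrow> (nat \<Rightarrow> real) \<Rightarrow> real" where
  "util k W i \<theta> = (\<Sum>j<k. W j i * \<theta> j)"

definition feasible :: "nat \<Rightarrow> (nat \<Rightarrow> nat \<Rightarrow> real) \<Rightarrow> real \<Rightarrow> (nat \<Rightarrow> real) \<Rightarrow> bool" where
  "feasible k W \<mu> \<theta> \<longleftrightarrow> (\<forall>i<k. util k W i \<theta> \<ge> \<mu>)"

definition stable_eq :: "nat \<Rightarrow> (nat \<Rightarrow> nat \<Rightarrow> real) \<Rightarrow> real \<Rightarrow> (nat \<Rightarrow> real) \<Rightarrow> bool" where
  "stable_eq k W \<mu> \<theta> \<longleftrightarrow>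
     (\<forall>i<k. 0 \<le> \<theta> i) \<and> feasible k W \<mu> \<theta> \<and>
     (\<forall>i<k. \<not> (\<exists>t. 0 \<le> t \<and> t < \<theta> i \<and> util k W i (\<theta>(i := t)) \<ge> \<mu>))"

definition optimal_stable_eq :: "nat \<Rightarrow> (nat \<Rightarrow> nat \<Rightarrow> real) \<Rightarrow> real \<Rightarrow> (nat \<Rightarrow> real) \<Rightarrow> bool" where
  "optimal_stable_eq k W \<mu> \<theta> \<longleftrightarrow>
     stable_eq k W \<mu> \<theta> \<and>
     (\<forall>\<theta>'. stable_eq k W \<mu> \<theta>' \<longrightarrow> (\<Sum>i<k. \<theta> i) \<le> (\<Sum>i<k. \<theta>' i))"

definition lp_feasible :: "nat set \<Rightarrow> (nat \<Rightarrow> nat \<Rightarrow> real) \<Rightarrow> real \<Rightarrow> (nat \<Rightarrow> real) \<Rightarrow> bool" where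
  "lp_feasible J W \<mu> x \<longleftrightarrow>
     (\<forall>i\<in>J. (\<Sum>j\<in>J. W i j * x j) \<ge> \<mu>) \<and> (\<forall>j\<in>J. 0 \<le> x j)"

definition lp_optimal :: "nat set \<Rightarrow> (nat \<Rightarrow> nat \<Rightarrow> real) \<Rightarrow> real \<Rightarrow> (nat \<Rightarrow> real) \<Rightarrow> bool" where
  "lp_optimal J W \<mu> x \<longleftrightarrow>
     lp_feasible J W \<mu> x \<and> (\<forall>y. lp_feasible J W \<mu> y \<longrightarrow> (\<Sum>j\<in>J. x j) \<le> (\<Sum>j\<in>J. y j))"

end

theory Submission
  imports Defs
begin

(* On the support J of theta_eq every player of a stable equilibrium sits exactly at the
   threshold (otherwise it could lower its effort), so theta_eq restricted to J is a strictly
   positive point with Wbar x = mu 1. Since Wbar is symmetric, weak duality against this point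
   shows it is LP-optimal, and complementary slackness forces Wbar theta_bar = mu 1 as well.
   Thus d = theta_eq - theta_bar, extended by zero, satisfies d^T W d = 0, and positive
   semidefiniteness of W gives W d = 0; the rows indexed by I are B^T d = 0. *)

lemma nonneg_quadratic_imp_linear_coeff_zero:
  fixes b c :: real
  assumes nonneg: "\<And>t. 0 \<le> b * t + c * t\<^sup>2"
  shows "b = 0"
proof (rule ccontr)
  assume "b \<noteq> 0"
  define s where "s = 1 / (\<bar>c\<bar> + 1)"
  have "s > 0" by (simp add: s_def add_pos_nonneg)
  have "c * s \<le> \<bar>c\<bar> * s" using \<open>s > 0\<close> by (simp add: mult_right_mono)
  also have "\<dots> < 1" by (simp add: s_def)
  finally have "c * s - 1 < 0" by simp
  have "b\<^sup>2 * s > 0" using \<open>b \<noteq> 0\<close> \<open>s > 0\<close> by simp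
  then have "b\<^sup>2 * s * (c * s - 1) < 0" by (rule mult_pos_neg) fact
  also have "b\<^sup>2 * s * (c * s - 1) = b * (- b * s) + c * (- b * s)\<^sup>2"
    by (simp add: power2_eq_square algebra_simps)
  finally show False using nonneg[of "- b * s"] by linarith
qed

lemma quad_form_add_delta:
  fixes W :: "nat \<Rightarrow> nat \<Rightarrow> real" and x :: "nat \<Rightarrow> real" and t :: real
  assumes sym: "\<forall>i<k. \<forall>j<k. W i j = W j i" and m: "m < k"
  defines "y \<equiv> \<lambda>i. x i + (if i = m then t else 0)"
  shows "(\<Sum>i<k. \<Sum>j<k. y i * W i j * y j)
       = (\<Sum>i<k. \<Sum>j<k. x i * W i j * x j) + 2 * (\<Sum>j<k. W m j * x j) * t + W m m * t\<^sup>2"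
proof -
  have delta: "(\<Sum>j<k. f j * (if j = m then t else 0)) = f m * t" for f :: "nat \<Rightarrow> real"
    using m by (simp add: if_distrib cong: if_cong)
  have row: "(\<Sum>j<k. a * W i j * y j) = (\<Sum>j<k. a * W i j * x j) + a * W i m * t" for a i
    unfolding y_def distrib_left sum.distrib delta ..
  have "(\<Sum>i<k. \<Sum>j<k. y i * W i j * y j)
      = (\<Sum>i<k. \<Sum>j<k. x i * W i j * y j) + (\<Sum>j<k. t * W m j * y j)"
    using delta[of "\<lambda>i. \<Sum>j<k. W i j * y j"]
    by (simp add: y_def algebra_simps sum.distrib sum_distrib_left)
  also have "\<dots> = (\<Sum>i<k. \<Sum>j<k. x i * W i j * x j) + (\<Sum>i<k. x i * W i m) * t
      + (\<Sum>j<k. t * W m j * x j) + t * W m m * t"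
    by (simp add: row sum.distrib sum_distrib_right)
  also have "(\<Sum>i<k. x i * W i m) = (\<Sum>j<k. W m j * x j)"
    using sym m by (intro sum.cong) auto
  also have "(\<Sum>j<k. t * W m j * x j) = (\<Sum>j<k. W m j * x j) * t"
    by (simp add: sum_distrib_left sum_distrib_right ac_simps)
  finally show ?thesis
    by (simp add: power2_eq_square algebra_simps)
qed

lemma psd_quad_form_eq_0_imp_mult_eq_0:
  fixes W :: "nat \<Rightarrow> nat \<Rightarrow> real"
  assumes "psd k W" and "\<forall>i<k. \<forall>j<k. W i j = W j i"
    and "(\<Sum>i<k. \<Sum>j<k. x i * W i j * x j) = 0" and "m < k"
  shows "(\<Sum>j<k. W m j * x j) = 0"
proof -
  have "2 * (\<Sum>j<k. W m j * x j) = 0"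
  proof (rule nonneg_quadratic_imp_linear_coeff_zero)
    fix t
    let ?y = "\<lambda>i. x i + (if i = m then t else 0)"
    have "0 \<le> (\<Sum>i<k. \<Sum>j<k. ?y i * W i j * ?y j)"
      using assms(1) unfolding psd_def by (rule spec)
    also have "\<dots> = 2 * (\<Sum>j<k. W m j * x j) * t + W m m * t\<^sup>2"
      using quad_form_add_delta[OF assms(2,4)] assms(3) by simp
    finally show "0 \<le> 2 * (\<Sum>j<k. W m j * x j) * t + W m m * t\<^sup>2" .
  qed
  then show ?thesis by simp
qed

lemma sum_mult_zero_extension:
  fixes f d :: "nat \<Rightarrow> real"
  assumes "J \<subseteq> {..<k}"
  shows "(\<Sum>j<k. f j * (if j \<in> J then d j else 0)) = (\<Sum>j\<in>J. f j * d j)"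
  using assms by (simp add: if_distrib sum.If_cases Int_absorb1)

lemma psd_kernel_on_support:
  fixes W :: "nat \<Rightarrow> nat \<Rightarrow> real"
  assumes psd: "psd k W" and sym: "\<forall>i<k. \<forall>j<k. W i j = W j i"
    and J: "J \<subseteq> {..<k}" and kernel: "\<forall>i\<in>J. (\<Sum>j\<in>J. W i j * d j) = 0"
    and m: "m < k"
  shows "(\<Sum>j\<in>J. W m j * d j) = 0"
proof -
  define x where "x j = (if j \<in> J then d j else 0)" for j
  have row: "(\<Sum>j<k. W i j * x j) = (\<Sum>j\<in>J. W i j * d j)" for i
    unfolding x_def using J by (rule sum_mult_zero_extension)
  have "(\<Sum>i<k. \<Sum>j<k. x i * W i j * x j) = (\<Sum>i<k. (\<Sum>j<k. W i j * x j) * x i)"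
    by (simp add: sum_distrib_left sum_distrib_right ac_simps)
  also have "\<dots> = (\<Sum>i<k. (\<Sum>j\<in>J. W i j * d j) * x i)"
    by (simp only: row)
  also have "\<dots> = (\<Sum>i\<in>J. (\<Sum>j\<in>J. W i j * d j) * d i)"
    unfolding x_def using J by (rule sum_mult_zero_extension)
  also have "\<dots> = 0"
    using kernel by simp
  finally have "(\<Sum>j<k. W m j * x j) = 0"
    using psd_quad_form_eq_0_imp_mult_eq_0[OF psd sym _ m] by blast
  then show ?thesis by (simp add: row)
qed

lemma util_fun_upd:
  assumes "i < k"
  shows "util k W i (\<theta>(i := t)) = util k W i \<theta> + W i i * (t - \<theta> i)"
proof -
  have "util k W i (\<theta>(i := t)) = W i i * t + (\<Sum>j\<in>{..<k} - {i}. W j i * \<theta> j)"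
    unfolding util_def using assms by (subst sum.remove[of _ i]) auto
  moreover have "util k W i \<theta> = W i i * \<theta> i + (\<Sum>j\<in>{..<k} - {i}. W j i * \<theta> j)"
    unfolding util_def using assms by (subst sum.remove[of _ i]) auto
  ultimately show ?thesis by (simp add: algebra_simps)
qed

lemma stable_eq_util_eq_at_positive:
  assumes st: "stable_eq k W \<mu> \<theta>" and i: "i < k" and "W i i > 0" and "\<theta> i > 0"
  shows "util k W i \<theta> = \<mu>"
proof (rule ccontr)
  assume "util k W i \<theta> \<noteq> \<mu>"
  with st i have excess: "util k W i \<theta> > \<mu>"
    unfolding stable_eq_def feasible_def by force
  \<comment> \<open>lowering \<open>\<theta> i\<close> by the excess divided by \<open>W i i\<close> keeps player \<open>i\<close> feasible\<close>
  define t where "t = max 0 (\<theta> i - (util k W i \<theta> - \<mu>) / W i i)"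
  have "t < \<theta> i"
    using excess \<open>W i i > 0\<close> \<open>\<theta> i > 0\<close> by (simp add: t_def)
  moreover have "util k W i (\<theta>(i := t)) \<ge> \<mu>"
  proof -
    have "- ((util k W i \<theta> - \<mu>) / W i i) \<le> t - \<theta> i"
      using max.cobounded2[of "\<theta> i - (util k W i \<theta> - \<mu>) / W i i" 0] unfolding t_def by linarith
    then have "W i i * (- ((util k W i \<theta> - \<mu>) / W i i)) \<le> W i i * (t - \<theta> i)"
      using \<open>W i i > 0\<close> by (simp only: mult_left_mono less_imp_le)
    then show ?thesis
      using \<open>W i i > 0\<close> by (simp add: util_fun_upd[OF i])
  qed
  ultimately show False
    using st i unfolding stable_eq_def by (auto simp: t_def)
qed

lemma stable_eq_rows_tight_on_support:
  fixes W :: "nat \<Rightarrow> nat \<Rightarrow> real"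
  assumes st: "stable_eq k W \<mu> \<theta>" and sym: "\<forall>i<k. \<forall>j<k. W i j = W j i"
    and diag: "\<forall>i<k. W i i > 0"
  defines "J \<equiv> {..<k} - {i. i < k \<and> \<theta> i = 0}"
  shows "\<forall>i\<in>J. (\<Sum>j\<in>J. W i j * \<theta> j) = \<mu>"
proof
  fix i assume "i \<in> J"
  then have "i < k" and "\<theta> i > 0"
    using st unfolding J_def stable_eq_def by (auto simp: less_le)
  have "(\<Sum>j\<in>J. W i j * \<theta> j) = util k W i \<theta>"
    unfolding util_def J_def using sym \<open>i < k\<close>
    by (intro sum.mono_neutral_cong_left) auto
  also have "\<dots> = \<mu>"
    using stable_eq_util_eq_at_positive[OF st \<open>i < k\<close>] diag \<open>i < k\<close> \<open>\<theta> i > 0\<close> by simp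
  finally show "(\<Sum>j\<in>J. W i j * \<theta> j) = \<mu>" .
qed

lemma sum_mult_row_sums_swap:
  fixes W :: "nat \<Rightarrow> nat \<Rightarrow> real"
  assumes "\<forall>i\<in>J. \<forall>j\<in>J. W i j = W j i"
  shows "(\<Sum>i\<in>J. y i * (\<Sum>j\<in>J. W i j * x j)) = (\<Sum>j\<in>J. x j * (\<Sum>i\<in>J. W j i * y i))"
proof -
  have "(\<Sum>i\<in>J. y i * (\<Sum>j\<in>J. W i j * x j)) = (\<Sum>i\<in>J. \<Sum>j\<in>J. x j * (W j i * y i))"
    using assms by (simp add: sum_distrib_left ac_simps)
  also have "\<dots> = (\<Sum>j\<in>J. x j * (\<Sum>i\<in>J. W j i * y i))"
    by (subst sum.swap) (simp add: sum_distrib_left)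
  finally show ?thesis .
qed

lemma lp_optimal_tight_if_positive_tight_point:
  fixes W :: "nat \<Rightarrow> nat \<Rightarrow> real"
  assumes "finite J" and sym: "\<forall>i\<in>J. \<forall>j\<in>J. W i j = W j i" and "\<mu> > 0"
    and x_tight: "\<forall>i\<in>J. (\<Sum>j\<in>J. W i j * x j) = \<mu>" and x_pos: "\<forall>j\<in>J. x j > 0"
    and y: "lp_optimal J W \<mu> y"
  shows "\<forall>i\<in>J. (\<Sum>j\<in>J. W i j * y j) = \<mu>"
proof -
  have y_feas: "\<forall>i\<in>J. (\<Sum>j\<in>J. W i j * y j) \<ge> \<mu>"
    using y unfolding lp_optimal_def lp_feasible_def by blast
  have "lp_feasible J W \<mu> x"
    using x_tight x_pos unfolding lp_feasible_def by (auto intro: less_imp_le)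
  then have "sum y J \<le> sum x J"
    using y unfolding lp_optimal_def by blast
  have "(\<Sum>j\<in>J. x j * ((\<Sum>i\<in>J. W j i * y i) - \<mu>))
      = (\<Sum>j\<in>J. x j * (\<Sum>i\<in>J. W j i * y i)) - \<mu> * sum x J"
    by (simp add: right_diff_distrib sum_subtractf sum_distrib_left mult.commute)
  also have "(\<Sum>j\<in>J. x j * (\<Sum>i\<in>J. W j i * y i)) = (\<Sum>i\<in>J. y i * (\<Sum>j\<in>J. W i j * x j))"
    by (rule sum_mult_row_sums_swap[OF sym, symmetric])
  also have "\<dots> = \<mu> * sum y J"
    using x_tight by (simp add: sum_distrib_left mult.commute)
  finally have slack: "(\<Sum>j\<in>J. x j * ((\<Sum>i\<in>J. W j i * y i) - \<mu>)) = \<mu> * (sum y J - sum x J)"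
    by (simp add: right_diff_distrib)
  have slack_nonneg: "0 \<le> x j * ((\<Sum>i\<in>J. W j i * y i) - \<mu>)" if "j \<in> J" for j
    using x_pos y_feas that by (intro mult_nonneg_nonneg) (auto simp: less_imp_le)
  have "\<mu> * (sum y J - sum x J) \<le> 0"
    using \<open>sum y J \<le> sum x J\<close> \<open>\<mu> > 0\<close> by (simp add: mult_nonneg_nonpos)
  moreover have "0 \<le> (\<Sum>j\<in>J. x j * ((\<Sum>i\<in>J. W j i * y i) - \<mu>))"
    using slack_nonneg by (rule sum_nonneg)
  ultimately have "(\<Sum>j\<in>J. x j * ((\<Sum>i\<in>J. W j i * y i) - \<mu>)) = 0"
    unfolding slack by linarith
  then have "\<forall>j\<in>J. x j * ((\<Sum>i\<in>J. W j i * y i) - \<mu>) = 0"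
    using slack_nonneg by (simp add: sum_nonneg_eq_0_iff[OF \<open>finite J\<close>])
  then show ?thesis
    using x_pos by fastforce
qed

theorem lemma4:
  fixes k :: nat and W :: "nat \<Rightarrow> nat \<Rightarrow> real" and \<mu> :: real
    and \<theta>eq \<theta>bar :: "nat \<Rightarrow> real"
  assumes W_range: "\<forall>i<k. \<forall>j<k. 0 \<le> W i j \<and> W i j \<le> 1"
    and W_sym: "\<forall>i<k. \<forall>j<k. W i j = W j i"
    and W_psd: "psd k W"
    and W_diag: "\<forall>i<k. W i i = 1"
    and mu_pos: "\<mu> > 0"
    and eq: "optimal_stable_eq k W \<mu> \<theta>eq"
    and lp: "lp_optimal ({..<k} - {i. i < k \<and> \<theta>eq i = 0}) W \<mu> \<theta>bar"
  shows "\<forall>i \<in> {i. i < k \<and> \<theta>eq i = 0}.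
           (\<Sum>j \<in> {..<k} - {i. i < k \<and> \<theta>eq i = 0}. W j i * (\<theta>eq j - \<theta>bar j)) = 0"
proof -
  define J where "J = {..<k} - {i. i < k \<and> \<theta>eq i = 0}"
  have J_sub: "J \<subseteq> {..<k}" and "finite J"
    unfolding J_def by auto
  have st: "stable_eq k W \<mu> \<theta>eq"
    using eq unfolding optimal_stable_eq_def by blast
  have pos: "\<forall>j\<in>J. \<theta>eq j > 0"
    using st unfolding stable_eq_def J_def by (auto simp: less_le)
  have eq_tight: "\<forall>i\<in>J. (\<Sum>j\<in>J. W i j * \<theta>eq j) = \<mu>"
    using stable_eq_rows_tight_on_support[OF st W_sym] W_diag unfolding J_def by simp
  have "\<forall>i\<in>J. \<forall>j\<in>J. W i j = W j i"
    using W_sym J_sub by blast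
  from lp_optimal_tight_if_positive_tight_point[OF \<open>finite J\<close> this mu_pos eq_tight pos]
  have bar_tight: "\<forall>i\<in>J. (\<Sum>j\<in>J. W i j * \<theta>bar j) = \<mu>"
    using lp unfolding J_def by blast
  have kernel: "\<forall>i\<in>J. (\<Sum>j\<in>J. W i j * (\<theta>eq j - \<theta>bar j)) = 0"
    using eq_tight bar_tight by (simp add: right_diff_distrib sum_subtractf)
  show ?thesis
  proof
    fix m assume "m \<in> {i. i < k \<and> \<theta>eq i = 0}"
    then have "m < k" by simp
    have "(\<Sum>j\<in>J. W j m * (\<theta>eq j - \<theta>bar j)) = (\<Sum>j\<in>J. W m j * (\<theta>eq j - \<theta>bar j))"
      using W_sym J_sub \<open>m < k\<close> by (intro sum.cong) auto
    also have "\<dots> = 0"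
      by (rule psd_kernel_on_support[OF W_psd W_sym J_sub kernel \<open>m < k\<close>])
    finally show "(\<Sum>j \<in> {..<k} - {i. i < k \<and> \<theta>eq i = 0}. W j m * (\<theta>eq j - \<theta>bar j)) = 0"
      unfolding J_def .
  qed
qed

end
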